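(* Let $n,k,t$ be positive integers with $k<n$ and $t\ge 4$, let $q$ be a prime power and $\mathcal{D}$ the Desarguesian $(t-1)$-spread of $\mathrm{PG}(nt-1,q)$. Let $\nu$ be a $\mathcal{D}_{n-k-1}$-subspace, $\Pi$ an $(nt-kt+1)$-dimensional subspace containing $\nu$ such that the points of $\mathcal{B}(\Pi)$ span an $(n-k+1)$-dimensional subspace of $\mathrm{PG}(n-1,q^t)$, $\Omega$ an $(nt-kt-2)$-dimensional subspace of $\Pi$ meeting $\nu$ in an $(nt-kt-4)$-dimensional subspace, $\Gamma$ a plane of $\Pi$ skew from $\Omega$, $\bar{B}$ a minimal blocking set of $\Gamma$ disjoint from $\nu$, and $K$ the cone with vertex $\Omega$ and base $\bar{B}$. Then $$|\mathcal{B}(K)|=|\bar{B}|(q^{nt-kt-1}-q^{nt-kt-3})+q^{nt-kt-2}+q^{nt-kt-3}+\epsilon$$ for some integer $\epsilon\ge 1$.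
   Context: Field reduction: each point of $\mathrm{PG}(n-1,q^t)$ corresponds to a $(t-1)$-dimensional subspace of $\mathrm{PG}(nt-1,q)$; these form the Desarguesian $(t-1)$-spread $\mathcal{D}$. A $\mathcal{D}_{r-1}$-subspace is an $(rt-1)$-dimensional subspace spanned by elements of $\mathcal{D}$. For $U\subseteq\mathrm{PG}(nt-1,q)$, $\mathcal{B}(U)$ is the set of elements of $\mathcal{D}$ meeting $U$, identified with points of $\mathrm{PG}(n-1,q^t)$. The cone with vertex $\Omega$ and base $\bar{B}$ is $\bigcup_{P\in\bar B}\langle P,\Omega\rangle$. A minimal blocking set of a plane is a point set meeting every line, no proper subset of which does so. *)

theory Defs
  imports "HOL-Analysis.Analysis" "HOL-Number_Theory.Prime_Powers"
begin

text \<open>F = GF(q^t) is a finite field type 'a, K \<subseteq> F is the subfield GF(q).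
  V = F^n is the type 'a^'n.  PG(n-1,q^t) = F-subspaces of V;
  PG(nt-1,q) = K-subspaces of the same vector set V (field reduction).
  Subspaces are represented by their sets of vectors; point sets of PG(nt-1,q)
  are represented by sets of vectors (a vector v \<noteq> 0 represents the point K v).\<close>

definition is_subfield :: "'a::field set \<Rightarrow> bool" where
  "is_subfield K \<longleftrightarrow> 0 \<in> K \<and> 1 \<in> K \<and> (\<forall>x\<in>K. \<forall>y\<in>K. x + y \<in> K \<and> x * y \<in> K)
     \<and> (\<forall>x\<in>K. - x \<in> K) \<and> (\<forall>x\<in>K. inverse x \<in> K)"

definition ksubspace :: "'a::field set \<Rightarrow> ('a^'n) set \<Rightarrow> bool" where
  "ksubspace K W \<longleftrightarrow> 0 \<in> W \<and> (\<forall>x\<in>W. \<forall>y\<in>W. x + y \<in> W) \<and> (\<forall>c\<in>K. \<forall>x\<in>W. c *s x \<in> W)"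

definition kspan :: "'a::field set \<Rightarrow> ('a^'n) set \<Rightarrow> ('a^'n) set" where
  "kspan K S = \<Inter>{W. ksubspace K W \<and> S \<subseteq> W}"

definition kdim :: "'a::field set \<Rightarrow> ('a^'n) set \<Rightarrow> nat" where
  "kdim K W = (LEAST d. \<exists>B. finite B \<and> card B = d \<and> B \<subseteq> W \<and> kspan K B = W)"

definition kproj_subspace :: "'a::field set \<Rightarrow> nat \<Rightarrow> ('a^'n) set \<Rightarrow> bool" where
  "kproj_subspace K d W \<longleftrightarrow> ksubspace K W \<and> kdim K W = d + 1"

text \<open>Desarguesian spread: the points of PG(n-1,q^t), i.e. 1-dimensional F-subspaces.\<close>
definition desarg_spread :: "('a::field^'n) set set" where
  "desarg_spread = {P. vec.subspace P \<and> vec.dim P = 1}"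

definition D_subspace :: "'a::field set \<Rightarrow> nat \<Rightarrow> nat \<Rightarrow> ('a^'n) set \<Rightarrow> bool" where
  "D_subspace K t r W \<longleftrightarrow> kproj_subspace K (r * t - 1) W \<and>
     (\<exists>S \<subseteq> desarg_spread. W = kspan K (\<Union>S))"

definition BU :: "('a::field^'n) set \<Rightarrow> ('a^'n) set set" where
  "BU U = {P \<in> desarg_spread. \<exists>v \<in> U. v \<noteq> 0 \<and> v \<in> P}"

definition cone :: "'a::field set \<Rightarrow> ('a^'n) set \<Rightarrow> ('a^'n) set set \<Rightarrow> ('a^'n) set" where
  "cone K Omega Bbar = (\<Union>P\<in>Bbar. kspan K (P \<union> Omega))"

definition blocking_set :: "'a::field set \<Rightarrow> ('a^'n) set \<Rightarrow> ('a^'n) set set \<Rightarrow> bool" where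
  "blocking_set K Gam B \<longleftrightarrow> (\<forall>P\<in>B. kproj_subspace K 0 P \<and> P \<subseteq> Gam) \<and>
     (\<forall>L. kproj_subspace K 1 L \<and> L \<subseteq> Gam \<longrightarrow> (\<exists>P\<in>B. P \<subseteq> L))"

definition minimal_blocking_set :: "'a::field set \<Rightarrow> ('a^'n) set \<Rightarrow> ('a^'n) set set \<Rightarrow> bool" where
  "minimal_blocking_set K Gam B \<longleftrightarrow> blocking_set K Gam B \<and>
     (\<forall>B'. B' \<subset> B \<longrightarrow> \<not> blocking_set K Gam B')"

end

(* Count vectors over K = GF(q) and let b = (n - k) t - 3, so that |Omega| = q^(b+2) and
   |Omega \<inter> nu| = q^b.  The vectors of the cone outside nu are at least those of Omega - nu
   together with, for each base point P, the vectors of <P, Omega> outside Omega and nu; the latter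
   sets are pairwise disjoint since Gam is skew to Omega, and each has at least
   (q - 1)(q^(b+2) - q^b) elements.  Conversely, a spread element E through a vector of the cone
   outside nu meets Pi in at most one K-point: a K-line E \<inter> Pi would be skew to nu and hence
   complementary to it in Pi, so that B(Pi) would span only <E, nu>, of F-dimension n - k + 1.
   So these vectors lie on at least 1/(q - 1) as many spread elements, none of them inside nu,
   and a nonzero vector of Omega \<inter> nu contributes one more spread element: this is epsilon >= 1. *)

theory Submission
  imports Defs
begin

section \<open>Subspaces over the subfield\<close>

lemma is_subfieldD:
  assumes "is_subfield K"
  shows "0 \<in> K" "1 \<in> K" "x \<in> K \<Longrightarrow> y \<in> K \<Longrightarrow> x + y \<in> K"
    "x \<in> K \<Longrightarrow> y \<in> K \<Longrightarrow> x * y \<in> K" "x \<in> K \<Longrightarrow> - x \<in> K"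
    "x \<in> K \<Longrightarrow> inverse x \<in> K" "x \<in> K \<Longrightarrow> y \<in> K \<Longrightarrow> x - y \<in> K"
  using assms unfolding is_subfield_def
  by (blast, blast, blast, blast, blast, blast, metis diff_conv_add_uminus)

lemma ksubspaceD:
  fixes W :: "('a::field^'n) set"
  assumes K: "is_subfield K" and W: "ksubspace K W"
  shows "0 \<in> W" "x \<in> W \<Longrightarrow> y \<in> W \<Longrightarrow> x + y \<in> W" "c \<in> K \<Longrightarrow> x \<in> W \<Longrightarrow> c *s x \<in> W"
    "x \<in> W \<Longrightarrow> - x \<in> W" "x \<in> W \<Longrightarrow> y \<in> W \<Longrightarrow> x - y \<in> W"
proof -
  show "0 \<in> W" and add: "x \<in> W \<Longrightarrow> y \<in> W \<Longrightarrow> x + y \<in> W"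
    and scale: "c \<in> K \<Longrightarrow> x \<in> W \<Longrightarrow> c *s x \<in> W" for x y c
    using W unfolding ksubspace_def by auto
  show neg: "x \<in> W \<Longrightarrow> - x \<in> W" for x
    using scale[of "-1" x] is_subfieldD(2,5)[OF K] by (metis vector_sneg_minus1)
  show "x \<in> W \<Longrightarrow> y \<in> W \<Longrightarrow> x - y \<in> W"
    using add neg by (metis diff_conv_add_uminus)
qed

lemma ksubspace_sum:
  fixes W :: "('a::field^'n) set"
  assumes "is_subfield K" "ksubspace K W" "\<And>i. i \<in> A \<Longrightarrow> f i \<in> W"
  shows "sum f A \<in> W"
  using assms(3) by (induction A rule: infinite_finite_induct)
    (auto intro: ksubspaceD[OF assms(1,2)])

lemma ksubspace_Int: "ksubspace K U \<Longrightarrow> ksubspace K W \<Longrightarrow> ksubspace K (U \<inter> W)"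
  unfolding ksubspace_def by auto

lemma ksubspace_kspan: "ksubspace K (kspan K S)"
  unfolding kspan_def ksubspace_def by auto

lemma kspan_superset: "S \<subseteq> kspan K S"
  unfolding kspan_def by auto

lemma kspan_least: "ksubspace K W \<Longrightarrow> S \<subseteq> W \<Longrightarrow> kspan K S \<subseteq> W"
  unfolding kspan_def by auto

lemma kspan_eq: "ksubspace K W \<Longrightarrow> kspan K W = W"
  using kspan_superset kspan_least by blast

lemma kspan_mono: "S \<subseteq> T \<Longrightarrow> kspan K S \<subseteq> kspan K T"
  by (meson ksubspace_kspan kspan_least kspan_superset order_trans)

definition kcomb :: "('a::field^'n) set \<Rightarrow> ('a^'n \<Rightarrow> 'a) \<Rightarrow> 'a^'n" where
  "kcomb B c = (\<Sum>b\<in>B. c b *s b)"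

lemma kspan_finite:
  fixes B :: "('a::field^'n) set"
  assumes K: "is_subfield K" and fin: "finite B"
  shows "kspan K B = kcomb B ` (B \<rightarrow>\<^sub>E K)"
proof
  let ?C = "kcomb B ` (B \<rightarrow>\<^sub>E K)"
  have "ksubspace K ?C"
    unfolding ksubspace_def
  proof (intro conjI ballI)
    show "0 \<in> ?C"
      by (rule image_eqI[of _ _ "restrict (\<lambda>_. 0) B"]) (auto simp: kcomb_def is_subfieldD[OF K])
  next
    fix x y assume "x \<in> ?C" "y \<in> ?C"
    then obtain c d where "c \<in> B \<rightarrow>\<^sub>E K" "x = kcomb B c" "d \<in> B \<rightarrow>\<^sub>E K" "y = kcomb B d"
      by auto
    then show "x + y \<in> ?C"
      by (intro image_eqI[of _ _ "restrict (\<lambda>b. c b + d b) B"])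
        (auto simp: kcomb_def sum.distrib intro: is_subfieldD(3)[OF K])
  next
    fix a x assume "a \<in> K" "x \<in> ?C"
    then obtain c where "c \<in> B \<rightarrow>\<^sub>E K" "x = kcomb B c" by auto
    with \<open>a \<in> K\<close> show "a *s x \<in> ?C"
      by (intro image_eqI[of _ _ "restrict (\<lambda>b. a * c b) B"])
        (auto simp: kcomb_def vec.scale_sum_right intro: is_subfieldD(4)[OF K])
  qed
  moreover have "b \<in> ?C" if b: "b \<in> B" for b
  proof (rule image_eqI)
    show "restrict (\<lambda>x. if x = b then 1 else 0) B \<in> B \<rightarrow>\<^sub>E K"
      by (auto simp: is_subfieldD[OF K])
    have "kcomb B (restrict (\<lambda>x. if x = b then 1 else 0) B) = (\<Sum>x\<in>B. if x = b then x else 0)"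
      unfolding kcomb_def by (rule sum.cong) auto
    then show "b = kcomb B (restrict (\<lambda>x. if x = b then 1 else 0) B)"
      using b fin by simp
  qed
  ultimately show "kspan K B \<subseteq> ?C"
    by (intro kspan_least) auto
  show "?C \<subseteq> kspan K B"
  proof
    fix x assume "x \<in> ?C"
    then obtain c where c: "c \<in> B \<rightarrow>\<^sub>E K" "x = kcomb B c" by auto
    have "c b *s b \<in> kspan K B" if "b \<in> B" for b
      using that c(1) kspan_superset[of B K]
      by (intro ksubspaceD(3)[OF K ksubspace_kspan]) (auto simp: PiE_iff)
    then show "x \<in> kspan K B"
      unfolding c kcomb_def by (intro ksubspace_sum[OF K ksubspace_kspan])
  qed
qed

lemma inj_on_kcomb:
  fixes B :: "('a::field^'n) set"
  assumes K: "is_subfield K" and fin: "finite B"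
    and minimal: "\<And>b. b \<in> B \<Longrightarrow> b \<notin> kspan K (B - {b})"
  shows "inj_on (kcomb B) (B \<rightarrow>\<^sub>E K)"
proof
  fix c c' assume c: "c \<in> B \<rightarrow>\<^sub>E K" and c': "c' \<in> B \<rightarrow>\<^sub>E K" and eq: "kcomb B c = kcomb B c'"
  show "c = c'"
  proof (rule ccontr)
    assume "c \<noteq> c'"
    then obtain b where b: "b \<in> B" and ne: "c b \<noteq> c' b"
      using c c' PiE_ext by blast
    define e where "e = c b - c' b"
    define r where "r = (\<Sum>x\<in>B-{b}. (c x - c' x) *s x)"
    have eK: "e \<in> K" and e0: "e \<noteq> 0"
      unfolding e_def using c c' b ne is_subfieldD(7)[OF K] by auto
    have "0 = (\<Sum>x\<in>B. (c x - c' x) *s x)"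
      using eq unfolding kcomb_def by (simp add: sum_subtractf)
    also have "\<dots> = e *s b + r"
      unfolding e_def r_def using sum.remove[OF fin b, of "\<lambda>x. (c x - c' x) *s x"] by simp
    finally have eb: "e *s b = - r"
      by (simp add: eq_neg_iff_add_eq_0)
    have "r \<in> kspan K (B - {b})"
      unfolding r_def using c c' kspan_superset[of "B - {b}" K]
      by (intro ksubspace_sum[OF K ksubspace_kspan] ksubspaceD(3)[OF K ksubspace_kspan])
        (auto intro: is_subfieldD(7)[OF K])
    then have "inverse e *s (e *s b) \<in> kspan K (B - {b})"
      unfolding eb
      by (intro ksubspaceD(3,4)[OF K ksubspace_kspan] is_subfieldD(6)[OF K eK])
    with e0 b minimal show False
      by simp
  qed
qed

lemma card_ksubspace:
  fixes W :: "('a::{field,finite}^'n) set"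
  assumes K: "is_subfield K" and W: "ksubspace K W"
  shows "card W = card K ^ kdim K W"
proof -
  define spans where "spans d \<longleftrightarrow> (\<exists>B. finite B \<and> card B = d \<and> B \<subseteq> W \<and> kspan K B = W)" for d
  have "spans (card W)"
    unfolding spans_def using kspan_eq[OF W] by auto
  then have "spans (kdim K W)"
    unfolding kdim_def spans_def[symmetric] by (rule LeastI)
  then obtain B where fin: "finite B" and cB: "card B = kdim K W" and BW: "B \<subseteq> W"
    and span: "kspan K B = W"
    unfolding spans_def by blast
  have "b \<notin> kspan K (B - {b})" if b: "b \<in> B" for b
  proof
    assume "b \<in> kspan K (B - {b})"
    then have "B \<subseteq> kspan K (B - {b})"
      using kspan_superset[of "B - {b}" K] by blast
    then have "kspan K (B - {b}) = W"
      using span kspan_least[OF ksubspace_kspan] kspan_mono[of "B - {b}" B K] by blast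
    then have "spans (card (B - {b}))"
      unfolding spans_def using fin BW by blast
    moreover have "card (B - {b}) < kdim K W"
      using card_Diff1_less[OF fin b] cB by simp
    ultimately show False
      unfolding kdim_def spans_def[symmetric] using not_less_Least by blast
  qed
  then have "card W = card (B \<rightarrow>\<^sub>E K)"
    using card_image[OF inj_on_kcomb[OF K fin]] kspan_finite[OF K fin] span by simp
  then show ?thesis
    using fin cB by (simp add: card_PiE)
qed

lemma card_kproj_subspace:
  fixes W :: "('a::{field,finite}^'n) set"
  assumes "is_subfield K" "kproj_subspace K d W"
  shows "card W = card K ^ (d + 1)"
  using assms card_ksubspace unfolding kproj_subspace_def by metis

lemma kproj_subspace_of_card:
  fixes W :: "('a::{field,finite}^'n) set"
  assumes K: "is_subfield K" and W: "ksubspace K W" and "1 < card K"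
    and "card W = card K ^ (d + 1)"
  shows "kproj_subspace K d W"
  using assms card_ksubspace[OF K W] power_inject_exp unfolding kproj_subspace_def by metis

section \<open>Sums of subspaces\<close>

lemma ksubspace_set_plus:
  fixes U W :: "('a::field^'n) set"
  assumes "ksubspace K U" "ksubspace K W"
  shows "ksubspace K (U + W)"
  unfolding ksubspace_def
proof (intro conjI ballI)
  show "0 \<in> U + W"
    using assms set_plus_intro[of 0 U 0 W] unfolding ksubspace_def by simp
next
  fix a b assume "a \<in> U + W" "b \<in> U + W"
  then obtain x y x' y' where "a = x + y" "b = x' + y'" "x \<in> U" "y \<in> W" "x' \<in> U" "y' \<in> W"
    by (auto elim!: set_plus_elim)
  then have "a + b = (x + x') + (y + y')" and "x + x' \<in> U" and "y + y' \<in> W"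
    using assms unfolding ksubspace_def by (auto simp: algebra_simps)
  then show "a + b \<in> U + W"
    by auto
next
  fix c a assume "c \<in> K" "a \<in> U + W"
  then obtain x y where "a = x + y" "x \<in> U" "y \<in> W"
    by (auto elim!: set_plus_elim)
  with \<open>c \<in> K\<close> show "c *s a \<in> U + W"
    using assms unfolding ksubspace_def by auto
qed

lemma set_plus_least:
  fixes U W :: "('a::field^'n) set"
  assumes "ksubspace K V" "U \<subseteq> V" "W \<subseteq> V"
  shows "U + W \<subseteq> V"
  using assms unfolding ksubspace_def by (auto elim!: set_plus_elim)

lemma kspan_Un:
  fixes U W :: "('a::field^'n) set"
  assumes "ksubspace K U" "ksubspace K W"
  shows "kspan K (U \<union> W) = U + W"
proof
  have "0 \<in> U" "0 \<in> W"
    using assms unfolding ksubspace_def by auto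
  then have "U \<union> W \<subseteq> U + W"
    using set_zero_plus2[of U W] set_zero_plus2[of W U] by (auto simp: add.commute)
  then show "kspan K (U \<union> W) \<subseteq> U + W"
    by (intro kspan_least ksubspace_set_plus assms)
  show "U + W \<subseteq> kspan K (U \<union> W)"
    using kspan_superset[of "U \<union> W" K] by (intro set_plus_least[OF ksubspace_kspan]) auto
qed

lemma card_set_plus_mult_card_Int:
  fixes U W :: "('a::{field,finite}^'n) set"
  assumes K: "is_subfield K" and U: "ksubspace K U" and W: "ksubspace K W"
  shows "card (U + W) * card (U \<inter> W) = card U * card W"
proof -
  define fibre where "fibre s = {p \<in> U \<times> W. fst p + snd p = s}" for s
  have fibre_card: "card (fibre s) = card (U \<inter> W)" if "s \<in> U + W" for s
  proof -
    obtain u0 w0 where s: "s = u0 + w0" "u0 \<in> U" "w0 \<in> W"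
      using \<open>s \<in> U + W\<close> by (auto elim!: set_plus_elim)
    have "bij_betw (\<lambda>d. (u0 + d, w0 - d)) (U \<inter> W) (fibre s)"
    proof (rule bij_betwI')
      show "(u0 + d, w0 - d) \<in> fibre s" if "d \<in> U \<inter> W" for d
        unfolding fibre_def using that s ksubspaceD(2)[OF K U] ksubspaceD(5)[OF K W] by auto
      show "\<exists>d\<in>U \<inter> W. p = (u0 + d, w0 - d)" if "p \<in> fibre s" for p
      proof -
        obtain u w where "p = (u, w)"
          by (cases p)
        then have p: "p = (u, w)" "u \<in> U" "w \<in> W" "u + w = s"
          using that unfolding fibre_def by auto
        then have eq: "w0 - w = u - u0"
          using s(1) by (simp add: algebra_simps)
        moreover have "u - u0 \<in> U" "w0 - w \<in> W"
          using p s ksubspaceD(5)[OF K U] ksubspaceD(5)[OF K W] by auto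
        ultimately have "u - u0 \<in> U \<inter> W"
          by simp
        moreover have "p = (u0 + (u - u0), w0 - (u - u0))"
          using p(1) eq by (simp add: algebra_simps)
        ultimately show ?thesis
          by blast
      qed
    qed auto
    then show ?thesis
      by (simp add: bij_betw_same_card)
  qed
  have "U \<times> W = (\<Union>s\<in>U + W. fibre s)"
    unfolding fibre_def by auto
  then have "card U * card W = card (\<Union>s\<in>U + W. fibre s)"
    by (metis card_cartesian_product)
  also have "\<dots> = (\<Sum>s\<in>U + W. card (fibre s))"
    by (rule card_UN_disjoint) (auto simp: fibre_def)
  finally show ?thesis
    using fibre_card by simp
qed

lemma card_set_plus_of_Int_zero:
  fixes U W :: "('a::{field,finite}^'n) set"
  assumes "is_subfield K" "ksubspace K U" "ksubspace K W" "U \<inter> W = {0}"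
  shows "card (U + W) = card U * card W"
  using card_set_plus_mult_card_Int[OF assms(1-3)] assms(4) by simp

lemma card_Int_mult_card_le:
  fixes L N W :: "('a::{field,finite}^'n) set"
  assumes K: "is_subfield K" and L: "ksubspace K L" and N: "ksubspace K N"
    and W: "ksubspace K W" "W \<subseteq> L"
  shows "card (L \<inter> N) * card W \<le> card L * card (W \<inter> N)"
proof -
  have M: "ksubspace K (L \<inter> N)"
    by (rule ksubspace_Int[OF L N])
  have "L \<inter> N \<inter> W = W \<inter> N"
    using W(2) by blast
  then have "card (L \<inter> N) * card W = card ((L \<inter> N) + W) * card (W \<inter> N)"
    using card_set_plus_mult_card_Int[OF K M W(1)] by simp
  also have "\<dots> \<le> card L * card (W \<inter> N)"
    using set_plus_least[OF L _ W(2), of "L \<inter> N"] by (simp add: card_mono)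
  finally show ?thesis .
qed

section \<open>Points, lines and the cone\<close>

definition kpoint :: "'a::field set \<Rightarrow> 'a^'n \<Rightarrow> ('a^'n) set" where
  "kpoint K u = (\<lambda>c. c *s u) ` K"

lemma ksubspace_kpoint:
  assumes K: "is_subfield K"
  shows "ksubspace K (kpoint K u)"
  unfolding ksubspace_def kpoint_def
proof (intro conjI ballI)
  show "0 \<in> (\<lambda>c. c *s u) ` K"
    using is_subfieldD(1)[OF K] by force
next
  fix x y assume "x \<in> (\<lambda>c. c *s u) ` K" "y \<in> (\<lambda>c. c *s u) ` K"
  then obtain c d where "c \<in> K" "d \<in> K" "x + y = (c + d) *s u"
    by auto
  then show "x + y \<in> (\<lambda>c. c *s u) ` K"
    using is_subfieldD(3)[OF K] by blast
next
  fix a x assume "a \<in> K" "x \<in> (\<lambda>c. c *s u) ` K"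
  then obtain c where "c \<in> K" "a *s x = (a * c) *s u"
    by auto
  with \<open>a \<in> K\<close> show "a *s x \<in> (\<lambda>c. c *s u) ` K"
    using is_subfieldD(4)[OF K] by blast
qed

lemma card_kpoint: "u \<noteq> 0 \<Longrightarrow> card (kpoint K u) = card K"
  unfolding kpoint_def by (rule card_image) (auto simp: inj_on_def)

lemma kpoint_subset:
  assumes "is_subfield K" "ksubspace K W" "u \<in> W"
  shows "kpoint K u \<subseteq> W"
  unfolding kpoint_def using ksubspaceD(3)[OF assms(1,2) _ assms(3)] by blast

lemma ksubspace_eq_kpoint:
  fixes P :: "('a::{field,finite}^'n) set"
  assumes "is_subfield K" "ksubspace K P" "card P = card K" "p \<in> P" "p \<noteq> 0"
  shows "P = kpoint K p"
  using card_subset_eq[OF finite kpoint_subset[OF assms(1,2,4)]] card_kpoint[OF assms(5)] assms(3)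
  by simp

lemma kpoint_Int_kpoint:
  fixes u v :: "'a::field^'n"
  assumes K: "is_subfield K" and v: "v \<notin> kpoint K u"
  shows "kpoint K u \<inter> kpoint K v = {0}"
proof -
  have "x = 0" if "c \<in> K" "d \<in> K" "x = c *s u" "x = d *s v" for x c d
  proof (rule ccontr)
    assume "x \<noteq> 0"
    then have "d \<noteq> 0"
      using that by auto
    then have "v = (inverse d * c) *s u"
      using that by (metis vector_smult_assoc vector_smult_lid left_inverse)
    then show False
      using v that is_subfieldD(4,6)[OF K] unfolding kpoint_def by blast
  qed
  then show ?thesis
    using ksubspaceD(1)[OF K ksubspace_kpoint[OF K]] unfolding kpoint_def by blast
qed

lemma ksubspace_contains_kproj_line:
  fixes G :: "('a::{field,finite}^'n) set"
  assumes K: "is_subfield K" "1 < card K" and G: "ksubspace K G" "card K < card G"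
  shows "\<exists>L. kproj_subspace K 1 L \<and> L \<subseteq> G"
proof -
  obtain u where u: "u \<in> G" "u \<noteq> 0"
    using G(2) K(2) card_mono[OF finite, of G "{0}"] by fastforce
  obtain v where v: "v \<in> G" "v \<notin> kpoint K u"
    using G(2) card_mono[OF finite, of G "kpoint K u"] card_kpoint[OF u(2)] by fastforce
  then have "v \<noteq> 0"
    using ksubspaceD(1)[OF K(1) ksubspace_kpoint[OF K(1)]] by blast
  define L where "L = kpoint K u + kpoint K v"
  have "ksubspace K L"
    unfolding L_def by (intro ksubspace_set_plus ksubspace_kpoint K(1))
  moreover have "card L = card K ^ (1 + 1)"
    unfolding L_def
    using K(1) card_set_plus_of_Int_zero[OF K(1) ksubspace_kpoint ksubspace_kpoint kpoint_Int_kpoint[OF K(1) v(2)]]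
      card_kpoint[OF u(2)] card_kpoint[OF \<open>v \<noteq> 0\<close>]
    by (simp add: power2_eq_square)
  moreover have "L \<subseteq> G"
    unfolding L_def using kpoint_subset[OF K(1) G(1)] u v by (intro set_plus_least[OF G(1)])
  ultimately show ?thesis
    using kproj_subspace_of_card[OF K(1) _ K(2)] by blast
qed

lemma blocking_set_nonempty:
  fixes Gam :: "('a::{field,finite}^'n) set"
  assumes K: "is_subfield K" "1 < card K"
    and "kproj_subspace K 2 Gam" "blocking_set K Gam B"
  shows "B \<noteq> {}"
proof -
  have "card K ^ 1 < card K ^ (2 + 1)"
    using K(2) by (intro power_strict_increasing) auto
  then have "card K < card Gam"
    using card_kproj_subspace[OF K(1) assms(3)] by simp
  moreover have "ksubspace K Gam"
    using assms(3) unfolding kproj_subspace_def by blast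
  ultimately obtain L where "kproj_subspace K 1 L" "L \<subseteq> Gam"
    using ksubspace_contains_kproj_line[OF K] by blast
  then show ?thesis
    using assms(4) unfolding blocking_set_def by blast
qed

lemma blocking_set_kpoint:
  fixes Gam :: "('a::{field,finite}^'n) set"
  assumes "is_subfield K" "blocking_set K Gam B" "P \<in> B"
  shows "ksubspace K P \<and> card P = card K \<and> P \<subseteq> Gam"
  using assms card_kproj_subspace[OF assms(1), of 0 P]
  unfolding blocking_set_def kproj_subspace_def by auto

lemma set_plus_kpoints_Int_subset:
  fixes G W P P' :: "('a::{field,finite}^'n) set"
  assumes K: "is_subfield K" and G: "ksubspace K G" and W: "ksubspace K W" "G \<inter> W = {0}"
    and P: "ksubspace K P" "card P = card K" "P \<subseteq> G"
    and P': "ksubspace K P'" "card P' = card K" "P' \<subseteq> G" and "P \<noteq> P'"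
  shows "(P + W) \<inter> (P' + W) \<subseteq> W"
proof
  fix x assume "x \<in> (P + W) \<inter> (P' + W)"
  then have "x \<in> P + W" "x \<in> P' + W"
    by auto
  then obtain p w p' w' where x: "x = p + w" "p \<in> P" "w \<in> W" "x = p' + w'" "p' \<in> P'" "w' \<in> W"
    by (metis set_plus_elim)
  then have "p - p' = w' - w"
    by (simp add: algebra_simps)
  moreover have "p - p' \<in> G" "w' - w \<in> W"
    using x(2,3,5,6) P(3) P'(3) ksubspaceD(5)[OF K G] ksubspaceD(5)[OF K W(1)] by blast+
  ultimately have "p = p'"
    using W(2) by (metis IntI diff_eq_diff_eq diff_self singletonD)
  show "x \<in> W"
  proof (cases "p = 0")
    case True
    then show ?thesis
      using x by simp
  next
    case False
    then have "P = kpoint K p" "P' = kpoint K p"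
      using ksubspace_eq_kpoint[OF K] P P' x \<open>p = p'\<close> by metis+
    with \<open>P \<noteq> P'\<close> show ?thesis
      by simp
  qed
qed

(* P + W has q |W| vectors, of which at most q |W \<inter> N| lie in N. *)
lemma card_kpoint_set_plus_diff:
  fixes P W N :: "('a::{field,finite}^'n) set"
  assumes K: "is_subfield K" and P: "ksubspace K P" "card P = card K"
    and W: "ksubspace K W" "P \<inter> W = {0}" and N: "ksubspace K N"
  shows "(card K - 1) * (card W - card (W \<inter> N)) \<le> card (P + W - W - N)"
proof -
  define L where "L = P + W"
  define M where "M = L \<inter> N"
  have L: "ksubspace K L"
    unfolding L_def by (rule ksubspace_set_plus[OF P(1) W(1)])
  have WL: "W \<subseteq> L"
    unfolding L_def using set_zero_plus2 ksubspaceD(1)[OF K P(1)] by blast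
  have cL: "card L = card K * card W"
    unfolding L_def using card_set_plus_of_Int_zero[OF K P(1) W(1,2)] P(2) by (simp only:)
  have "card W > 0"
    using ksubspaceD(1)[OF K W(1)] by (metis card_gt_0_iff empty_iff finite)
  moreover have "card M * card W \<le> card K * card (W \<inter> N) * card W"
    using card_Int_mult_card_le[OF K L N W(1) WL] cL unfolding M_def by (simp add: ac_simps)
  ultimately have cM: "card M \<le> card K * card (W \<inter> N)"
    by simp
  have "W \<inter> M = W \<inter> N"
    using WL unfolding M_def by blast
  then have cWM: "card (W \<union> M) + card (W \<inter> N) = card W + card M"
    by (metis card_Un_Int finite)
  have "P + W - W - N = L - (W \<union> M)" and "W \<union> M \<subseteq> L"
    unfolding L_def M_def using WL L_def by auto
  then have Y: "int (card (P + W - W - N)) = int (card L) - int (card (W \<union> M))"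
    by (simp add: card_Diff_subset card_mono)
  have "card (W \<inter> N) \<le> card W" "1 \<le> card K"
    using card_mono[OF finite, of "W \<inter> N" W] is_subfieldD(1)[OF K]
    by (auto simp: Suc_le_eq card_gt_0_iff)
  then have "int ((card K - 1) * (card W - card (W \<inter> N)))
      = (int (card K) - 1) * (int (card W) - int (card (W \<inter> N)))"
    by simp
  also have "\<dots> = int (card K) * int (card W) - int (card K) * int (card (W \<inter> N))
      - int (card W) + int (card (W \<inter> N))"
    by (simp add: algebra_simps)
  finally have lhs: "int ((card K - 1) * (card W - card (W \<inter> N))) = \<dots>" .
  have "int (card M) \<le> int (card K) * int (card (W \<inter> N))"
    using cM by (metis of_nat_le_iff of_nat_mult)
  moreover have "int (card L) = int (card K) * int (card W)"
    "int (card (W \<union> M)) + int (card (W \<inter> N)) = int (card W) + int (card M)"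
    using cL cWM by (metis of_nat_mult, metis of_nat_add)
  ultimately show ?thesis
    using Y lhs by linarith
qed

lemma cone_eq_UN_set_plus:
  assumes "ksubspace K W" "\<And>P. P \<in> B \<Longrightarrow> ksubspace K P"
  shows "cone K W B = (\<Union>P\<in>B. P + W)"
  unfolding cone_def using kspan_Un assms by (intro SUP_cong) auto

lemma card_cone_diff_ge:
  fixes W N G :: "('a::{field,finite}^'n) set"
  assumes K: "is_subfield K" and W: "ksubspace K W" and G: "ksubspace K G" "G \<inter> W = {0}"
    and N: "ksubspace K N"
    and B: "B \<noteq> {}" "\<And>P. P \<in> B \<Longrightarrow> ksubspace K P \<and> card P = card K \<and> P \<subseteq> G"
  shows "(card W - card (W \<inter> N)) * (1 + (card K - 1) * card B) \<le> card (cone K W B - N)"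
proof -
  define Y where "Y P = P + W - W - N" for P
  define r where "r = card K - 1"
  define c where "c = card W - card (W \<inter> N)"
  have cone: "cone K W B = (\<Union>P\<in>B. P + W)"
    using cone_eq_UN_set_plus[OF W] B(2) by blast
  have "W \<subseteq> P + W" if "P \<in> B" for P
    using set_zero_plus2 ksubspaceD(1)[OF K] B(2)[OF that] by blast
  then have "(W - N) \<union> (\<Union>P\<in>B. Y P) \<subseteq> cone K W B - N"
    unfolding cone Y_def using B(1) by blast
  then have "card ((W - N) \<union> (\<Union>P\<in>B. Y P)) \<le> card (cone K W B - N)"
    by (simp add: card_mono)
  moreover have "card ((W - N) \<union> (\<Union>P\<in>B. Y P)) = card (W - N) + (\<Sum>P\<in>B. card (Y P))"
  proof -
    have "Y P \<inter> Y P' = {}" if "P \<in> B" "P' \<in> B" "P \<noteq> P'" for P P'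
      using set_plus_kpoints_Int_subset[OF K G(1) W G(2)] B(2) that unfolding Y_def by blast
    then have "card (\<Union>P\<in>B. Y P) = (\<Sum>P\<in>B. card (Y P))"
      by (intro card_UN_disjoint) auto
    moreover have "(W - N) \<inter> (\<Union>P\<in>B. Y P) = {}"
      unfolding Y_def by blast
    ultimately show ?thesis
      by (simp add: card_Un_disjoint)
  qed
  moreover have "card (W - N) = c"
    unfolding c_def by (rule card_Diff_subset_Int) simp
  moreover have "card B * (r * c) \<le> (\<Sum>P\<in>B. card (Y P))"
  proof -
    have "r * c \<le> card (Y P)" if "P \<in> B" for P
    proof -
      have "0 \<in> P" "0 \<in> W" "P \<subseteq> G"
        using B(2)[OF that] ksubspaceD(1)[OF K] W by auto
      then have "P \<inter> W = {0}"
        using G(2) by blast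
      then show ?thesis
        unfolding Y_def r_def c_def
        using card_kpoint_set_plus_diff[OF K _ _ W(1) _ N] B(2)[OF that] by blast
    qed
    then show ?thesis
      using sum_mono[of B "\<lambda>_. r * c" "\<lambda>P. card (Y P)"] by simp
  qed
  moreover have "c * (1 + r * card B) = c + card B * (r * c)"
    by (simp add: algebra_simps)
  ultimately show ?thesis
    unfolding r_def[symmetric] c_def[symmetric] by linarith
qed

section \<open>The Desarguesian spread\<close>

lemma ksubspace_UNIV_iff: "ksubspace UNIV W \<longleftrightarrow> vec.subspace W"
  unfolding ksubspace_def vec.subspace_def by auto

lemma ksubspace_of_vec_subspace: "vec.subspace W \<Longrightarrow> ksubspace K W"
  unfolding ksubspace_def vec.subspace_def by auto

lemma kspan_UNIV: "kspan UNIV S = vec.span S"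
  unfolding kspan_def vec.span_def hull_def ksubspace_UNIV_iff ..

lemma kdim_UNIV:
  fixes W :: "('a::field^'n) set"
  assumes W: "vec.subspace W"
  shows "kdim UNIV W = vec.dim W"
  unfolding kdim_def
proof (rule Least_equality)
  obtain B where B: "B \<subseteq> W" "vec.independent B" "W \<subseteq> vec.span B" "card B = vec.dim W"
    by (rule vec.basis_exists)
  then show "\<exists>B. finite B \<and> card B = vec.dim W \<and> B \<subseteq> W \<and> kspan UNIV B = W"
    using vec.span_subspace[OF B(1,3) W] vec.finiteI_independent by (auto simp: kspan_UNIV)
next
  fix d assume "\<exists>B. finite B \<and> card B = d \<and> B \<subseteq> W \<and> kspan UNIV B = W"
  then show "vec.dim W \<le> d"
    using vec.span_card_ge_dim by (auto simp: kspan_UNIV)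
qed

lemma card_vec_subspace:
  fixes W :: "('a::{field,finite}^'n) set"
  assumes "vec.subspace W"
  shows "card W = CARD('a) ^ vec.dim W"
  using card_ksubspace[of UNIV W] assms kdim_UNIV[OF assms]
  by (simp add: is_subfield_def ksubspace_UNIV_iff)

lemma span_singleton_in_desarg_spread: "v \<noteq> 0 \<Longrightarrow> vec.span {v} \<in> desarg_spread"
  unfolding desarg_spread_def by simp

lemma desarg_spread_subspace: "E \<in> desarg_spread \<Longrightarrow> vec.subspace E"
  unfolding desarg_spread_def by auto

lemma desarg_spread_eq_span:
  assumes E: "E \<in> desarg_spread" and v: "v \<in> E" "v \<noteq> 0"
  shows "E = vec.span {v}"
proof -
  have E': "vec.subspace E" "vec.dim E = 1"
    using E unfolding desarg_spread_def by auto
  then have "vec.span {v} \<subseteq> E"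
    using v(1) by (simp add: vec.span_minimal)
  then show ?thesis
    using vec.subspace_dim_equal[of "vec.span {v}" E] E' v(2) by simp
qed

lemma desarg_spread_Int_subspace:
  assumes "E \<in> desarg_spread" "vec.subspace N" "\<not> E \<subseteq> N"
  shows "E \<inter> N = {0}"
proof -
  have "w = 0" if "w \<in> E" "w \<in> N" for w
  proof (rule ccontr)
    assume "w \<noteq> 0"
    then have "E = vec.span {w}"
      using desarg_spread_eq_span assms(1) that(1) by blast
    then show False
      using assms(2,3) that(2) by (simp add: vec.span_minimal)
  qed
  moreover have "0 \<in> E" "0 \<in> N"
    using vec.subspace_0 desarg_spread_subspace[OF assms(1)] assms(2) by blast+
  ultimately show ?thesis
    by blast
qed

lemma Union_BU_subset:
  assumes "vec.subspace T" "U \<subseteq> T"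
  shows "\<Union>(BU U) \<subseteq> T"
proof
  fix y assume "y \<in> \<Union>(BU U)"
  then obtain E v where "E \<in> desarg_spread" "v \<in> U" "v \<noteq> 0" "v \<in> E" "y \<in> E"
    unfolding BU_def by blast
  then have "y \<in> vec.span {v}" "v \<in> T"
    using desarg_spread_eq_span assms(2) by blast+
  then show "y \<in> T"
    using assms(1) by (meson empty_subsetI insert_subset subsetD vec.span_minimal)
qed

lemma kspan_Union_desarg_spread:
  fixes S :: "('a::field^'n) set set"
  assumes K: "is_subfield K" and S: "S \<subseteq> desarg_spread"
  shows "kspan K (\<Union>S) = vec.span (\<Union>S)"
proof
  show "kspan K (\<Union>S) \<subseteq> vec.span (\<Union>S)"
    by (intro kspan_least ksubspace_of_vec_subspace vec.subspace_span vec.span_superset)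
  show "vec.span (\<Union>S) \<subseteq> kspan K (\<Union>S)"
  proof
    fix x assume "x \<in> vec.span (\<Union>S)"
    then show "x \<in> kspan K (\<Union>S)"
    proof (induction rule: vec.span_induct_alt)
      case base
      then show ?case
        using ksubspaceD(1)[OF K ksubspace_kspan] .
    next
      case (step c x y)
      then obtain E where "E \<in> S" "x \<in> E"
        by blast
      then have "c *s x \<in> E"
        using S desarg_spread_subspace vec.subspace_scale by blast
      then have "c *s x \<in> kspan K (\<Union>S)"
        using \<open>E \<in> S\<close> kspan_superset[of "\<Union>S" K] by blast
      then show ?case
        using step(2) ksubspaceD(2)[OF K ksubspace_kspan] by blast
    qed
  qed
qed

lemma D_subspace_vec_dim:
  fixes W :: "('a::{field,finite}^'n) set"
  assumes K: "is_subfield K" "card K = q" "1 < q" and F: "CARD('a) = q ^ t"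
    and "0 < r" "0 < t" and W: "D_subspace K t r W"
  shows "vec.subspace W" "vec.dim W = r"
proof -
  obtain S where "S \<subseteq> desarg_spread" "W = kspan K (\<Union>S)" and P: "kproj_subspace K (r * t - 1) W"
    using W unfolding D_subspace_def by blast
  then have "W = vec.span (\<Union>S)"
    using kspan_Union_desarg_spread[OF K(1)] by blast
  then show sub: "vec.subspace W"
    by simp
  have "q ^ (t * vec.dim W) = q ^ (r * t)"
    using card_vec_subspace[OF sub] card_kproj_subspace[OF K(1) P] K(2) F assms(5,6)
    by (simp add: power_mult)
  then show "vec.dim W = r"
    using K(3) assms(6) by simp
qed

lemma skew_set_plus_eq_of_codim_two:
  fixes V N Pi :: "('a::{field,finite}^'n) set"
  assumes K: "is_subfield K" "1 < card K" and V: "ksubspace K V" "card K < card V"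
    and N: "ksubspace K N" "V \<inter> N = {0}"
    and Pi: "ksubspace K Pi" "V \<subseteq> Pi" "N \<subseteq> Pi" "card Pi = card K ^ 2 * card N"
  shows "V + N = Pi"
proof -
  have cVN: "card (V + N) = card V * card N"
    using card_set_plus_of_Int_zero[OF K(1) V(1) N] .
  have VN: "V + N \<subseteq> Pi"
    using Pi by (intro set_plus_least) auto
  have "0 < card N"
    using ksubspaceD(1)[OF K(1) N(1)] by (metis card_gt_0_iff empty_iff finite)
  moreover have "card V * card N \<le> card K ^ 2 * card N"
    using card_mono[OF finite VN] cVN Pi(4) by simp
  ultimately have "card K ^ kdim K V \<le> card K ^ 2"
    using card_ksubspace[OF K(1) V(1)] by simp
  then have "kdim K V \<le> 2"
    by (rule power_le_imp_le_exp[OF K(2)])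
  moreover have "card K ^ 1 < card K ^ kdim K V"
    using V(2) card_ksubspace[OF K(1) V(1)] by simp
  then have "1 < kdim K V"
    using power_strict_increasing_iff[OF K(2)] by blast
  ultimately have "kdim K V = 2"
    by linarith
  then show ?thesis
    using card_ksubspace[OF K(1) V(1)] card_subset_eq[OF finite VN] cVN Pi(4) by simp
qed

(* A K-line E \<inter> Pi would be skew to N, hence complementary to N in Pi, and then B(Pi) would span
   only <E, N>. *)
lemma card_desarg_spread_Int_le:
  fixes N Pi :: "('a::{field,finite}^'n) set"
  assumes K: "is_subfield K" "1 < card K" and E: "E \<in> desarg_spread" "\<not> E \<subseteq> N"
    and N: "vec.subspace N" and Pi: "ksubspace K Pi" "N \<subseteq> Pi" "card Pi = card K ^ 2 * card N"
    and dim: "vec.dim (vec.span (\<Union>(BU Pi))) = vec.dim N + 2"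
  shows "card (E \<inter> Pi) \<le> card K"
proof (rule ccontr)
  assume big: "\<not> card (E \<inter> Pi) \<le> card K"
  have "ksubspace K (E \<inter> Pi)"
    using ksubspace_Int[OF ksubspace_of_vec_subspace[OF desarg_spread_subspace[OF E(1)]] Pi(1)] .
  moreover have "(E \<inter> Pi) \<inter> N = {0}"
    using desarg_spread_Int_subspace[OF E(1) N E(2)] Pi(2) by (metis Int_absorb1 Int_assoc)
  ultimately have complement: "(E \<inter> Pi) + N = Pi"
    using big K Pi ksubspace_of_vec_subspace[OF N]
    by (intro skew_set_plus_eq_of_codim_two) auto
  have "\<not> E \<inter> Pi \<subseteq> {0}"
  proof
    assume "E \<inter> Pi \<subseteq> {0}"
    then have "card (E \<inter> Pi) \<le> 1"
      using card_mono[of "{0}" "E \<inter> Pi"] by simp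
    then show False
      using big K(2) by simp
  qed
  then obtain x where x: "x \<in> E" "x \<noteq> 0"
    by blast
  define T where "T = vec.span (insert x N)"
  have T: "vec.subspace T"
    unfolding T_def by simp
  have "E \<subseteq> T"
    unfolding T_def desarg_spread_eq_span[OF E(1) x] by (rule vec.span_mono) blast
  moreover have "N \<subseteq> T"
    unfolding T_def using vec.span_superset by blast
  ultimately have "Pi \<subseteq> T"
    using set_plus_least[OF ksubspace_of_vec_subspace[OF T], of "E \<inter> Pi" N] complement by blast
  then have "vec.span (\<Union>(BU Pi)) \<subseteq> T"
    by (intro vec.span_minimal Union_BU_subset T)
  then have "vec.dim (vec.span (\<Union>(BU Pi))) \<le> vec.dim (insert x N)"
    using vec.dim_subset unfolding T_def by (metis vec.dim_span)
  also have "\<dots> \<le> vec.dim N + 1"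
    by (simp add: vec.dim_insert)
  finally show False
    using dim by linarith
qed

lemma card_le_mult_card_BU:
  fixes X :: "('a::{field,finite}^'n) set"
  assumes "0 \<notin> X" and fibre: "\<And>E. E \<in> BU X \<Longrightarrow> card (E \<inter> X) \<le> m"
  shows "card X \<le> m * card (BU X)"
proof -
  have "X \<subseteq> (\<Union>E\<in>BU X. E \<inter> X)"
  proof
    fix x assume x: "x \<in> X"
    then have "x \<noteq> 0"
      using assms(1) by blast
    have "x \<in> vec.span {x}"
      by (simp add: vec.span_base)
    then have "vec.span {x} \<in> BU X"
      unfolding BU_def using span_singleton_in_desarg_spread[OF \<open>x \<noteq> 0\<close>] x \<open>x \<noteq> 0\<close> by blast
    then show "x \<in> (\<Union>E\<in>BU X. E \<inter> X)"
      using x \<open>x \<in> vec.span {x}\<close> by blast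
  qed
  then have "card X \<le> card (\<Union>E\<in>BU X. E \<inter> X)"
    by (intro card_mono) simp_all
  also have "\<dots> \<le> (\<Sum>E\<in>BU X. card (E \<inter> X))"
    by (intro card_UN_le) simp
  also have "\<dots> \<le> (\<Sum>E\<in>BU X. m)"
    by (intro sum_mono fibre)
  finally show ?thesis
    by (simp add: mult.commute)
qed

lemma card_diff_le_mult_card_BU:
  fixes C N Pi :: "('a::{field,finite}^'n) set"
  assumes K: "is_subfield K" "1 < card K"
    and N: "vec.subspace N" and Pi: "ksubspace K Pi" "N \<subseteq> Pi" "card Pi = card K ^ 2 * card N"
    and dim: "vec.dim (vec.span (\<Union>(BU Pi))) = vec.dim N + 2" and C: "C \<subseteq> Pi"
  shows "card (C - N) \<le> (card K - 1) * card (BU (C - N))"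
proof (rule card_le_mult_card_BU)
  show "0 \<notin> C - N"
    using vec.subspace_0[OF N] by blast
  fix E assume "E \<in> BU (C - N)"
  then obtain v where E: "E \<in> desarg_spread" "v \<in> E" "v \<in> C" "v \<notin> N"
    unfolding BU_def by blast
  then have "card (E \<inter> Pi) \<le> card K"
    using card_desarg_spread_Int_le[OF K E(1) _ N Pi dim] by blast
  moreover have "0 \<in> E \<inter> Pi"
    using vec.subspace_0[OF desarg_spread_subspace[OF E(1)]] vec.subspace_0[OF N] Pi(2) by blast
  moreover have "E \<inter> (C - N) \<subseteq> E \<inter> Pi - {0}"
    using C vec.subspace_0[OF N] by blast
  ultimately show "card (E \<inter> (C - N)) \<le> card K - 1"
    using card_mono[OF finite, of "E \<inter> (C - N)" "E \<inter> Pi - {0}"] card_Diff_singleton[of 0 "E \<inter> Pi"]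
    by linarith
qed

lemma card_BU_diff_less:
  fixes U N :: "('a::{field,finite}^'n) set"
  assumes "x \<in> U" "x \<in> N" "x \<noteq> 0" "vec.subspace N"
  shows "card (BU (U - N)) < card (BU U)"
proof (rule psubset_card_mono)
  have "vec.span {x} \<in> BU U"
    unfolding BU_def using span_singleton_in_desarg_spread[OF assms(3)] assms(1,3) vec.span_base[of x]
    by blast
  moreover have "vec.span {x} \<subseteq> N"
    using assms(2,4) by (simp add: vec.span_minimal)
  then have "vec.span {x} \<notin> BU (U - N)"
    unfolding BU_def by blast
  ultimately show "BU (U - N) \<subset> BU U"
    unfolding BU_def by blast
qed simp

lemma card_BU_cone_gt:
  fixes N Pi W G :: "('a::{field,finite}^'n) set"
  assumes K: "is_subfield K" "1 < card K"
    and N: "vec.subspace N" and Pi: "ksubspace K Pi" "N \<subseteq> Pi" "card Pi = card K ^ 2 * card N"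
    and dim: "vec.dim (vec.span (\<Union>(BU Pi))) = vec.dim N + 2"
    and W: "ksubspace K W" "W \<subseteq> Pi" "\<not> W \<inter> N \<subseteq> {0}"
    and G: "ksubspace K G" "G \<subseteq> Pi" "G \<inter> W = {0}"
    and B: "B \<noteq> {}" "\<And>P. P \<in> B \<Longrightarrow> ksubspace K P \<and> card P = card K \<and> P \<subseteq> G"
  shows "(card W - card (W \<inter> N)) * (1 + (card K - 1) * card B)
    < (card K - 1) * card (BU (cone K W B))"
proof -
  define C where "C = cone K W B"
  have "C \<subseteq> Pi"
    unfolding C_def cone_def using B(2) G(2) W(2) by (intro UN_least kspan_least[OF Pi(1)]) auto
  then have "card (C - N) \<le> (card K - 1) * card (BU (C - N))"
    by (rule card_diff_le_mult_card_BU[OF K N Pi dim])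
  moreover have "(card W - card (W \<inter> N)) * (1 + (card K - 1) * card B) \<le> card (C - N)"
    unfolding C_def
    using card_cone_diff_ge[OF K(1) W(1) G(1,3) ksubspace_of_vec_subspace[OF N] B] .
  moreover obtain P where "P \<in> B"
    using B(1) by blast
  then have "W \<subseteq> C"
    unfolding C_def cone_def using kspan_superset[of "P \<union> W" K] by blast
  then have "card (BU (C - N)) < card (BU C)"
    using card_BU_diff_less[OF _ _ _ N] W(3) by blast
  ultimately show ?thesis
    using K(2) unfolding C_def[symmetric] by (meson le_less_trans mult_less_mono2 zero_less_diff)
qed

(* The left-hand side of the hypothesis is (q - 1) times the main term of the count. *)
lemma excess_of_mult_less:
  fixes q b B M :: nat
  assumes q: "1 < q" and less: "(q ^ (b + 2) - q ^ b) * (1 + (q - 1) * B) < (q - 1) * M"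
  shows "\<exists>\<epsilon>::int. \<epsilon> \<ge> 1 \<and>
    int M = int B * (int q ^ (b + 2) - int q ^ b) + int q ^ (b + 1) + int q ^ b + \<epsilon>"
proof -
  define N where "N = int B * (int q ^ (b + 2) - int q ^ b) + int q ^ (b + 1) + int q ^ b"
  have "q ^ b \<le> q ^ (b + 2)" "1 \<le> q"
    using q by (simp_all add: power_increasing)
  note int_diff = of_nat_diff[where 'a = int, OF \<open>q ^ b \<le> q ^ (b + 2)\<close>]
    of_nat_diff[where 'a = int, OF \<open>1 \<le> q\<close>]
  have "(int q - 1) * N = (int q ^ (b + 2) - int q ^ b) * (1 + (int q - 1) * int B)"
    unfolding N_def power_add by algebra
  also have "\<dots> = int ((q ^ (b + 2) - q ^ b) * (1 + (q - 1) * B))"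
    using int_diff by (simp only: of_nat_mult of_nat_add of_nat_1 of_nat_power)
  also have "\<dots> < int ((q - 1) * M)"
    using less by (simp only: of_nat_less_iff)
  also have "\<dots> = (int q - 1) * int M"
    using int_diff by (simp only: of_nat_mult of_nat_1)
  finally have "N < int M"
    using q by (simp add: mult_less_cancel_left_pos)
  then show ?thesis
    by (intro exI[of _ "int M - N"]) (simp add: N_def)
qed

theorem proposition4p12:
  fixes K :: "'a::{field,finite} set"
    and n k t q :: nat
    and nu Pi_sp Omega Gam :: "('a^'n) set"
    and Bbar :: "('a^'n) set set"
  assumes "n = CARD('n)" and "0 < k" and "k < n" and "4 \<le> t"
    and "primepow q"
    and "is_subfield K" and "card K = q" and "CARD('a) = q ^ t"
    and "D_subspace K t (n - k) nu"
    and "kproj_subspace K (n*t - k*t + 1) Pi_sp" and "nu \<subseteq> Pi_sp"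
    and "vec.dim (vec.span (\<Union>(BU Pi_sp))) = n - k + 2"
    and "kproj_subspace K (n*t - k*t - 2) Omega" and "Omega \<subseteq> Pi_sp"
    and "kproj_subspace K (n*t - k*t - 4) (Omega \<inter> nu)"
    and "kproj_subspace K 2 Gam" and "Gam \<subseteq> Pi_sp" and "Gam \<inter> Omega = {0}"
    and "minimal_blocking_set K Gam Bbar"
    and "\<forall>P\<in>Bbar. P \<inter> nu = {0}"
  shows "\<exists>\<epsilon>::int. \<epsilon> \<ge> 1 \<and>
    int (card (BU (cone K Omega Bbar))) =
      int (card Bbar) * (int q ^ (n*t - k*t - 1) - int q ^ (n*t - k*t - 3))
      + int q ^ (n*t - k*t - 2) + int q ^ (n*t - k*t - 3) + \<epsilon>"
proof -
  have K: "is_subfield K" "1 < card K"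
    using assms(5-7) primepow_gt_Suc_0 by auto
  have "1 * t \<le> (n - k) * t"
    using assms(3) by (intro mult_le_mono1) simp
  define b where "b = (n - k) * t - 3"
  have b: "(n - k) * t = b + 3" "n*t - k*t = b + 3" "1 \<le> b"
    using \<open>1 * t \<le> (n - k) * t\<close> assms(4) unfolding b_def by (simp_all add: diff_mult_distrib)
  have nu: "vec.subspace nu" "vec.dim nu = n - k"
    using D_subspace_vec_dim[OF K(1) assms(7) _ assms(8) _ _ assms(9)] K(2) assms(3,4,7) by auto
  have "kproj_subspace K ((n - k) * t - 1) nu"
    using assms(9) unfolding D_subspace_def by blast
  from card_kproj_subspace[OF K(1) this] have card_nu: "card nu = q ^ (b + 3)"
    using assms(7) b(1) by (simp add: power_add power3_eq_cube mult_ac)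
  have "card Pi_sp = q ^ (2 + (b + 3))"
    using card_kproj_subspace[OF K(1) assms(10)] assms(7) b(2)
    by (simp add: power_add power2_eq_square power3_eq_cube mult_ac)
  then have card_Pi: "card Pi_sp = card K ^ 2 * card nu"
    unfolding card_nu assms(7) by (simp only: power_add)
  have card_Omega: "card Omega = q ^ (b + 2)" "card (Omega \<inter> nu) = q ^ b"
    using card_kproj_subspace[OF K(1) assms(13)] card_kproj_subspace[OF K(1) assms(15)] assms(7) b(2,3)
    by (simp_all add: power_add power2_eq_square mult_ac)
  moreover have "q ^ 1 \<le> q ^ b"
    using b(3) K(2) assms(7) by (intro power_increasing) auto
  ultimately have meet: "\<not> Omega \<inter> nu \<subseteq> {0}"
    using card_mono[of "{0}" "Omega \<inter> nu"] K(2) assms(7) by auto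
  have blocking: "Bbar \<noteq> {}" "blocking_set K Gam Bbar"
    using blocking_set_nonempty[OF K assms(16)] assms(19) unfolding minimal_blocking_set_def by blast+
  have sub: "ksubspace K Pi_sp" "ksubspace K Omega" "ksubspace K Gam"
    using assms(10,13,16) unfolding kproj_subspace_def by blast+
  have "(card Omega - card (Omega \<inter> nu)) * (1 + (card K - 1) * card Bbar)
      < (card K - 1) * card (BU (cone K Omega Bbar))"
    using assms(7,12) nu(2) card_Pi meet
    by (intro card_BU_cone_gt[OF K nu(1) sub(1) assms(11) _ _ sub(2) assms(14) _ sub(3) assms(17,18)
        blocking(1) blocking_set_kpoint[OF K(1) blocking(2)]]) simp_all
  then show ?thesis
    using excess_of_mult_less[of q b "card Bbar"] K(2) card_Omega assms(7) b(2) by simp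
qed

end
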